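(* For $n\ge 1$, the perfect matching complex $\mathcal{M}_p(\mathcal{G}_{2\times n})$ of the $(2\times n)$-grid graph is contractible if $n$ is odd, and is homotopy equivalent to the sphere $\mathbb{S}^k$ if $n$ is even and $n=2k+2$. *)

theory Defs
  imports "HOL-Analysis.Analysis"
begin

definition grid_vertices :: "nat \<Rightarrow> (nat \<times> nat) set" where
  "grid_vertices n = {(i, j). i < 2 \<and> j < n}"

definition grid_adj :: "nat \<times> nat \<Rightarrow> nat \<times> nat \<Rightarrow> bool" where
  "grid_adj u v \<longleftrightarrow>
     (fst u = fst v \<and> (snd u = snd v + 1 \<or> snd v = snd u + 1)) \<or>
     (snd u = snd v \<and> (fst u = fst v + 1 \<or> fst v = fst u + 1))"

definition grid_edges :: "nat \<Rightarrow> (nat \<times> nat) set set" where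
  "grid_edges n = {{u, v} | u v. u \<in> grid_vertices n \<and> v \<in> grid_vertices n \<and> grid_adj u v}"

definition perfect_matching :: "'v set \<Rightarrow> 'v set set \<Rightarrow> 'v set set \<Rightarrow> bool" where
  "perfect_matching V E M \<longleftrightarrow> M \<subseteq> E \<and> (\<forall>v\<in>V. \<exists>!e. e \<in> M \<and> v \<in> e)"

definition perfect_matching_complex :: "'v set \<Rightarrow> 'v set set \<Rightarrow> 'v set set set" where
  "perfect_matching_complex V E = {\<sigma>. \<exists>M. perfect_matching V E M \<and> \<sigma> \<subseteq> M}"

definition geometric_realization :: "'a set \<Rightarrow> 'a set set \<Rightarrow> ('a \<Rightarrow> real) topology" where
  "geometric_realization W K =
     subtopology (powertop_real W)
       {f. (\<forall>w\<in>W. 0 \<le> f w) \<and> (\<Sum>w\<in>W. f w) = 1 \<and> {w\<in>W. f w \<noteq> 0} \<in> K}"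

definition grid_pm_complex_space :: "nat \<Rightarrow> ((nat \<times> nat) set \<Rightarrow> real) topology" where
  "grid_pm_complex_space n =
     geometric_realization (grid_edges n)
       (perfect_matching_complex (grid_vertices n) (grid_edges n))"

end

theory Submission
  imports Defs
begin

(*
  If a vertex a of a simplicial complex dominates a vertex b, i.e. every face containing b stays a
  face after adding a, then moving the barycentric weight of b onto a deforms the realization onto
  the deletion of b. In the perfect matching complex of the 2 x n ladder, a perfect matching uses
  the top edge between columns j and j + 1 iff it uses the bottom edge below it, so the bottom
  edges dominate the top edges, and after deleting all top edges the faces are exactly the sets of
  pairwise disjoint rungs and bottom edges. There rung 2i dominates bottom edge 2i + 1. For
  n = 2q + 1, deleting these edges leaves a cone with apex rung 2q. For n = 2k + 2, deleting also
  the rungs 2i + 1 (dominated by rung 2i) leaves the complex on the pairs {rung 2i, bottom edge 2i},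
  i \<le> k, whose faces contain no complete pair: the boundary of the (k+1)-dimensional cross-polytope,
  whose realization is the l1-sphere and hence S^k.
*)

section \<open>Geometric realizations, deletions and domination\<close>

lemma topspace_geometric_realization:
  "topspace (geometric_realization W L) =
     {f \<in> extensional W. (\<forall>w\<in>W. 0 \<le> f w) \<and> sum f W = 1 \<and> support_on W f \<in> L}"
  unfolding geometric_realization_def support_on_def by (auto simp: PiE_def)

lemma continuous_map_geometric_realization_coordinate:
  "w \<in> W \<Longrightarrow> continuous_map (geometric_realization W L) euclideanreal (\<lambda>f. f w)"
  unfolding geometric_realization_def
  by (rule continuous_map_from_subtopology[OF continuous_map_product_projection])

lemma continuous_map_into_geometric_realization:
  assumes "\<And>x. x \<in> topspace X \<Longrightarrow> g x \<in> topspace (geometric_realization W L)"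
    and "\<And>w. w \<in> W \<Longrightarrow> continuous_map X euclideanreal (\<lambda>x. g x w)"
  shows "continuous_map X (geometric_realization W L) g"
  using assms unfolding geometric_realization_def continuous_map_in_subtopology
  by (auto simp: continuous_map_componentwise topspace_geometric_realization
      geometric_realization_def[symmetric] support_on_def)

lemma homotopic_with_geometric_realization_segment:
  assumes f: "continuous_map X (geometric_realization W L) f"
    and g: "continuous_map X (geometric_realization W L) g"
    and face: "\<And>x. x \<in> topspace X \<Longrightarrow> support_on W (f x) \<union> support_on W (g x) \<in> L"
    and down: "\<And>\<sigma> \<tau>. \<sigma> \<in> L \<Longrightarrow> \<tau> \<subseteq> \<sigma> \<Longrightarrow> \<tau> \<in> L"
  shows "homotopic_with (\<lambda>_. True) X (geometric_realization W L) f g"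
proof -
  let ?R = "geometric_realization W L"
  define h where "h = (\<lambda>(t::real, x). restrict (\<lambda>w. (1 - t) * f x w + t * g x w) W)"
  have fx: "f x \<in> topspace ?R" and gx: "g x \<in> topspace ?R" if "x \<in> topspace X" for x
    using that f g by (auto dest: continuous_map_image_subset_topspace)
  have "h (t, x) \<in> topspace ?R" if t: "t \<in> {0..1}" and x: "x \<in> topspace X" for t x
  proof -
    have "support_on W (h (t, x)) \<subseteq> support_on W (f x) \<union> support_on W (g x)"
      by (auto simp: h_def support_on_def)
    moreover have "(\<Sum>w\<in>W. (1 - t) * f x w + t * g x w) = 1"
      using fx[OF x] gx[OF x]
      by (simp add: sum.distrib flip: sum_distrib_left add: topspace_geometric_realization)
    ultimately show ?thesis
      using fx[OF x] gx[OF x] t face[OF x] down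
      by (auto simp: topspace_geometric_realization h_def intro!: add_nonneg_nonneg)
  qed
  moreover have "continuous_map X euclideanreal (\<lambda>x. f x w)" "continuous_map X euclideanreal (\<lambda>x. g x w)"
    if "w \<in> W" for w
    using continuous_map_compose[OF f continuous_map_geometric_realization_coordinate[OF that]]
      continuous_map_compose[OF g continuous_map_geometric_realization_coordinate[OF that]]
    by (simp_all add: o_def)
  ultimately have "continuous_map (prod_topology (top_of_set {0..1}) X) ?R h"
    by (intro continuous_map_into_geometric_realization)
      (auto simp: h_def case_prod_unfold intro!: continuous_intros
        continuous_map_compose[OF continuous_map_snd, unfolded o_def]
        continuous_map_into_fulltopology[OF continuous_map_fst])
  moreover have "h (0, x) = f x" "h (1, x) = g x" if "x \<in> topspace X" for x
    using fx[OF that] gx[OF that]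
    by (auto simp: h_def topspace_geometric_realization extensional_restrict)
  ultimately show ?thesis
    by (subst homotopic_with) (auto intro!: exI[of _ h])
qed

lemma continuous_map_geometric_realization_mono:
  "L \<subseteq> L' \<Longrightarrow> continuous_map (geometric_realization W L) (geometric_realization W L') id"
  by (rule continuous_map_into_geometric_realization)
    (auto simp: topspace_geometric_realization intro: continuous_map_geometric_realization_coordinate)

lemma sum_move_weight:
  fixes f :: "'a \<Rightarrow> real"
  assumes "finite W" "a \<in> W" "b \<in> W" "a \<noteq> b"
  shows "sum (f(a := f a + f b, b := 0)) W = sum f W"
proof -
  have "sum g W = sum g (W - {a, b}) + g a + g b" for g :: "'a \<Rightarrow> real"
    using assms by (simp add: sum.remove[of W a] sum.remove[of "W - {a}" b] Diff_insert2[symmetric] algebra_simps)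
  moreover have "sum (f(a := f a + f b, b := 0)) (W - {a, b}) = sum f (W - {a, b})"
    by (rule sum.cong) auto
  ultimately show ?thesis using assms by simp
qed

definition deletion :: "'a set set \<Rightarrow> 'a set \<Rightarrow> 'a set set" where
  "deletion L D = {\<sigma> \<in> L. \<sigma> \<inter> D = {}}"

definition dominates :: "'a set set \<Rightarrow> 'a \<Rightarrow> 'a \<Rightarrow> bool" where
  "dominates L a b \<longleftrightarrow> (\<forall>\<sigma>\<in>L. b \<in> \<sigma> \<longrightarrow> insert a \<sigma> \<in> L)"

lemma deletion_empty [simp]: "deletion L {} = L"
  by (simp add: deletion_def)

lemma deletion_deletion: "deletion (deletion L D) D' = deletion L (D \<union> D')"
  by (auto simp: deletion_def)

lemma deletion_down_closed:
  "(\<And>\<sigma> \<tau>. \<sigma> \<in> L \<Longrightarrow> \<tau> \<subseteq> \<sigma> \<Longrightarrow> \<tau> \<in> L) \<Longrightarrow> \<sigma> \<in> deletion L D \<Longrightarrow> \<tau> \<subseteq> \<sigma> \<Longrightarrow> \<tau> \<in> deletion L D"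
  by (auto simp: deletion_def)

lemma homotopy_equivalent_deletion_dominated:
  assumes fin: "finite W" and a: "a \<in> W" and b: "b \<in> W" "a \<noteq> b"
    and down: "\<And>\<sigma> \<tau>. \<sigma> \<in> L \<Longrightarrow> \<tau> \<subseteq> \<sigma> \<Longrightarrow> \<tau> \<in> L"
    and dom: "dominates L a b"
  shows "geometric_realization W L homotopy_equivalent_space geometric_realization W (deletion L {b})"
proof -
  let ?R = "geometric_realization W L" and ?R' = "geometric_realization W (deletion L {b})"
  define r where "r = (\<lambda>f::'a \<Rightarrow> real. f(a := f a + f b, b := 0))"
  have face: "support_on W f \<union> support_on W (r f) \<in> L" if "f \<in> topspace ?R" for f
  proof (cases "f b = 0")
    case True
    then show ?thesis using that by (auto simp: r_def fun_upd_idem topspace_geometric_realization)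
  next
    case False
    then have "insert a (support_on W f) \<in> L"
      using dom that b by (auto simp: dominates_def topspace_geometric_realization support_on_def)
    moreover have "support_on W f \<union> support_on W (r f) \<subseteq> insert a (support_on W f)"
      by (auto simp: r_def support_on_def)
    ultimately show ?thesis using down by blast
  qed
  have r_in: "r f \<in> topspace ?R'" if "f \<in> topspace ?R" for f
  proof -
    have "support_on W (r f) \<in> L" using face[OF that] down by blast
    moreover have "b \<notin> support_on W (r f)" by (simp add: r_def support_on_def)
    moreover have "sum (r f) W = 1"
      using that sum_move_weight[OF fin a b] by (simp add: r_def topspace_geometric_realization)
    ultimately show ?thesis
      using that a b by (auto simp: topspace_geometric_realization deletion_def r_def
          extensional_def intro!: add_nonneg_nonneg)
  qed
  have r: "continuous_map ?R ?R' r"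
  proof (rule continuous_map_into_geometric_realization)
    fix w assume "w \<in> W"
    then show "continuous_map ?R euclideanreal (\<lambda>f. r f w)"
      using a b by (auto simp: r_def intro!: continuous_intros continuous_map_geometric_realization_coordinate)
  qed (use r_in in auto)
  have incl: "continuous_map ?R' ?R id"
    by (rule continuous_map_geometric_realization_mono) (auto simp: deletion_def)
  have "homotopic_with (\<lambda>_. True) ?R ?R id (id \<circ> r)"
    using face continuous_map_compose[OF r incl] down
    by (intro homotopic_with_geometric_realization_segment) (auto simp: continuous_map_id)
  moreover have "homotopic_with (\<lambda>_. True) ?R' ?R' (r \<circ> id) id"
    using continuous_map_compose[OF incl r]
    by (intro homotopic_with_equal)
      (use b in \<open>auto simp: r_def topspace_geometric_realization deletion_def support_on_def fun_upd_idem\<close>)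
  ultimately show ?thesis
    unfolding homotopy_equivalent_space_def using r incl homotopic_with_symD by blast
qed

lemma homotopy_equivalent_deletion_dominated_sequence:
  fixes m :: nat
  assumes fin: "finite W" and down: "\<And>\<sigma> \<tau>. \<sigma> \<in> L \<Longrightarrow> \<tau> \<subseteq> \<sigma> \<Longrightarrow> \<tau> \<in> L"
    and ab: "\<And>i. i < m \<Longrightarrow> a i \<in> W \<and> b i \<in> W \<and> a i \<noteq> b i"
    and dom: "\<And>i. i < m \<Longrightarrow> dominates (deletion L (D \<union> b ` {..<i})) (a i) (b i)"
  shows "geometric_realization W (deletion L D) homotopy_equivalent_space
           geometric_realization W (deletion L (D \<union> b ` {..<m}))"
  using ab dom
proof (induction m)
  case 0
  then show ?case by (simp add: homotopy_equivalent_space_refl)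
next
  case (Suc m)
  have "geometric_realization W (deletion L (D \<union> b ` {..<m})) homotopy_equivalent_space
          geometric_realization W (deletion (deletion L (D \<union> b ` {..<m})) {b m})"
    using Suc.prems deletion_down_closed[OF down]
    by (intro homotopy_equivalent_deletion_dominated[OF fin, of "a m" "b m"]) auto
  then show ?case
    using Suc by (auto simp: deletion_deletion lessThan_Suc Un_ac intro: homotopy_eqv_trans)
qed

lemma contractible_geometric_realization_cone:
  assumes fin: "finite W" and c: "c \<in> W" and down: "\<And>\<sigma> \<tau>. \<sigma> \<in> L \<Longrightarrow> \<tau> \<subseteq> \<sigma> \<Longrightarrow> \<tau> \<in> L"
    and cone: "\<And>\<sigma>. \<sigma> \<in> L \<Longrightarrow> insert c \<sigma> \<in> L"
  shows "contractible_space (geometric_realization W L)"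
proof -
  let ?R = "geometric_realization W L"
  define z where "z = restrict (\<lambda>w. if w = c then 1 else 0 :: real) W"
  have supp_z: "support_on W z = {c}" using c by (auto simp: z_def support_on_def)
  have face: "support_on W f \<union> support_on W z \<in> L" if "f \<in> topspace ?R" for f
    using that cone by (auto simp: topspace_geometric_realization supp_z)
  show ?thesis
  proof (cases "topspace ?R = {}")
    case True
    then show ?thesis by (simp add: null_topspace_iff_trivial)
  next
    case False
    then have "{c} \<in> L" using face down supp_z by blast
    moreover have "sum z W = 1" using fin c by (simp add: z_def)
    ultimately have "z \<in> topspace ?R" using supp_z by (auto simp: topspace_geometric_realization z_def)
    then have "homotopic_with (\<lambda>_. True) ?R ?R id (\<lambda>_. z)"
      using face down by (intro homotopic_with_geometric_realization_segment) auto
    then show ?thesis unfolding contractible_space_def by blast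
  qed
qed

section \<open>The boundary of the cross-polytope\<close>

definition l1_sphere :: "nat \<Rightarrow> (nat \<Rightarrow> real) topology" where
  "l1_sphere k = subtopology (powertop_real UNIV) {x. (\<Sum>i\<le>k. \<bar>x i\<bar>) = 1 \<and> (\<forall>i>k. x i = 0)}"

lemma continuous_map_l1_sphere_projection: "continuous_map (l1_sphere k) euclideanreal (\<lambda>x. x i)"
  unfolding l1_sphere_def
  by (rule continuous_map_from_subtopology[OF continuous_map_product_projection]) simp

lemma sum_abs_eq_0_iff_sum_squares_eq_0:
  fixes x :: "nat \<Rightarrow> real"
  shows "(\<Sum>i\<le>k. \<bar>x i\<bar>) = 0 \<longleftrightarrow> (\<Sum>i\<le>k. x i ^ 2) = 0"
  by (simp add: sum_nonneg_eq_0_iff)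

lemma l1_sphere_homeomorphic_nsphere: "l1_sphere k homeomorphic_space nsphere k"
proof -
  define N1 where "N1 x = (\<Sum>i\<le>k. \<bar>x i\<bar>)" for x :: "nat \<Rightarrow> real"
  define N2 where "N2 x = sqrt (\<Sum>i\<le>k. x i ^ 2)" for x :: "nat \<Rightarrow> real"
  have top1: "topspace (l1_sphere k) = {x. N1 x = 1 \<and> (\<forall>i>k. x i = 0)}"
    by (simp add: l1_sphere_def N1_def)
  have top2: "topspace (nsphere k) = {x. N2 x = 1 \<and> (\<forall>i>k. x i = 0)}"
    by (simp add: nsphere N2_def)
  have N2_eq_1: "(\<Sum>i\<le>k. x i ^ 2) = 1 \<longleftrightarrow> N2 x = 1" for x
    by (simp add: N2_def)
  have N12: "N2 x > 0" if "N1 x = 1" for x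
    using that sum_abs_eq_0_iff_sum_squares_eq_0[of x k]
    by (simp add: N1_def N2_def sum_nonneg less_le)
  then have N12': "N2 x \<noteq> 0" if "N1 x = 1" for x
    using that by force
  have N21: "N1 x > 0" if "N2 x = 1" for x
    using that sum_abs_eq_0_iff_sum_squares_eq_0[of x k]
    by (simp add: N1_def N2_def sum_nonneg less_le)
  then have N21': "N1 x \<noteq> 0" if "N2 x = 1" for x
    using that by force
  have N1_scale: "N1 (\<lambda>i. x i / c) = N1 x / c" and N2_scale: "N2 (\<lambda>i. x i / c) = N2 x / c"
    if "c > 0" for x c
    using that by (simp_all add: N1_def N2_def sum_divide_distrib power_divide real_sqrt_divide
        flip: sum_divide_distrib)
  show ?thesis
    unfolding homeomorphic_space_def homeomorphic_maps_def
  proof (intro exI conjI ballI)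
    have "continuous_map (l1_sphere k) euclideanreal N2"
      unfolding N2_def by (intro continuous_intros continuous_map_l1_sphere_projection) simp
    then show "continuous_map (l1_sphere k) (nsphere k) (\<lambda>x i. x i / N2 x)"
      unfolding nsphere continuous_map_in_subtopology continuous_map_componentwise_UNIV N2_eq_1
      using top1 N12 N12' N2_scale
      by (auto intro!: continuous_intros continuous_map_l1_sphere_projection)
    have "continuous_map (nsphere k) euclideanreal N1"
      unfolding N1_def by (intro continuous_intros continuous_map_nsphere_projection) simp
    then show "continuous_map (nsphere k) (l1_sphere k) (\<lambda>x i. x i / N1 x)"
      unfolding l1_sphere_def continuous_map_in_subtopology continuous_map_componentwise_UNIV
        N1_def[symmetric]
      using top2 N21 N21' N1_scale
      by (auto intro!: continuous_intros continuous_map_nsphere_projection)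
    fix x
    show "(\<lambda>i. x i / N2 x / N1 (\<lambda>i. x i / N2 x)) = x" if "x \<in> topspace (l1_sphere k)"
      using that top1 N12 N12' N1_scale by auto
    show "(\<lambda>i. x i / N1 x / N2 (\<lambda>i. x i / N1 x)) = x" if "x \<in> topspace (nsphere k)"
      using that top2 N21 N21' N2_scale by auto
  qed
qed

text \<open>The vertices p i and q i play the roles of the antipodal points e_i and -e_i.\<close>
definition cross_polytope_boundary :: "(nat \<Rightarrow> 'a) \<Rightarrow> (nat \<Rightarrow> 'a) \<Rightarrow> nat \<Rightarrow> 'a set set" where
  "cross_polytope_boundary p q k =
     {\<sigma>. \<sigma> \<subseteq> p ` {..k} \<union> q ` {..k} \<and> (\<forall>i\<le>k. \<not> (p i \<in> \<sigma> \<and> q i \<in> \<sigma>))}"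

context
  fixes W :: "'a set" and p q :: "nat \<Rightarrow> 'a" and k :: nat
  assumes fin: "finite W" and p: "p ` {..k} \<subseteq> W" "inj_on p {..k}"
    and q: "q ` {..k} \<subseteq> W" "inj_on q {..k}" and pq: "p ` {..k} \<inter> q ` {..k} = {}"
begin

lemma in_cross_polytope_realizationD:
  assumes "f \<in> topspace (geometric_realization W (cross_polytope_boundary p q k))"
  shows "\<And>w. w \<in> W \<Longrightarrow> w \<notin> p ` {..k} \<union> q ` {..k} \<Longrightarrow> f w = 0"
    and "\<And>i. i \<le> k \<Longrightarrow> f (p i) = 0 \<or> f (q i) = 0"
    and "\<And>i. i \<le> k \<Longrightarrow> 0 \<le> f (p i) \<and> 0 \<le> f (q i)"
    and "(\<Sum>i\<le>k. \<bar>f (p i) - f (q i)\<bar>) = 1"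
proof -
  have f: "f \<in> extensional W" "\<forall>w\<in>W. 0 \<le> f w" "sum f W = 1"
    and supp: "support_on W f \<in> cross_polytope_boundary p q k"
    using assms by (auto simp: topspace_geometric_realization)
  show zero: "f w = 0" if "w \<in> W" "w \<notin> p ` {..k} \<union> q ` {..k}" for w
    using supp that by (auto simp: cross_polytope_boundary_def support_on_def)
  show alt: "f (p i) = 0 \<or> f (q i) = 0" if "i \<le> k" for i
    using supp that p q by (auto simp: cross_polytope_boundary_def support_on_def)
  show nonneg: "0 \<le> f (p i) \<and> 0 \<le> f (q i)" if "i \<le> k" for i
    using f(2) p q that by auto
  have "1 = sum f W" using f(3) by simp
  also have "\<dots> = sum f (p ` {..k} \<union> q ` {..k})"
    by (rule sum.mono_neutral_right) (use fin p q zero in auto)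
  also have "\<dots> = (\<Sum>i\<le>k. f (p i) + f (q i))"
    using pq p q by (simp add: sum.union_disjoint sum.reindex sum.distrib)
  also have "\<dots> = (\<Sum>i\<le>k. \<bar>f (p i) - f (q i)\<bar>)"
    using alt nonneg by (intro sum.cong) fastforce+
  finally show "(\<Sum>i\<le>k. \<bar>f (p i) - f (q i)\<bar>) = 1" by simp
qed

definition cross_polytope_point :: "(nat \<Rightarrow> real) \<Rightarrow> 'a \<Rightarrow> real" where
  "cross_polytope_point x = restrict (\<lambda>w. \<Sum>i\<le>k.
     (if w = p i then max (x i) 0 else 0) + (if w = q i then max (- x i) 0 else 0)) W"

lemma cross_polytope_point_p: "j \<le> k \<Longrightarrow> cross_polytope_point x (p j) = max (x j) 0"
proof -
  assume j: "j \<le> k"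
  have "cross_polytope_point x (p j) = (\<Sum>i\<le>k.
      (if p j = p i then max (x i) 0 else 0) + (if p j = q i then max (- x i) 0 else 0))"
    using p j by (auto simp: cross_polytope_point_def)
  also have "\<dots> = (\<Sum>i\<le>k. if i = j then max (x i) 0 else 0)"
    using j pq inj_onD[OF p(2)] by (intro sum.cong) auto
  finally show ?thesis using j by simp
qed

lemma cross_polytope_point_q: "j \<le> k \<Longrightarrow> cross_polytope_point x (q j) = max (- x j) 0"
proof -
  assume j: "j \<le> k"
  have "cross_polytope_point x (q j) = (\<Sum>i\<le>k.
      (if q j = p i then max (x i) 0 else 0) + (if q j = q i then max (- x i) 0 else 0))"
    using q j by (auto simp: cross_polytope_point_def)
  also have "\<dots> = (\<Sum>i\<le>k. if i = j then max (- x i) 0 else 0)"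
    using j pq inj_onD[OF q(2)] by (intro sum.cong) auto
  finally show ?thesis using j by simp
qed

lemma cross_polytope_point_other:
  "w \<in> W \<Longrightarrow> w \<notin> p ` {..k} \<union> q ` {..k} \<Longrightarrow> cross_polytope_point x w = 0"
  by (auto simp: cross_polytope_point_def intro!: sum.neutral)

lemma cross_polytope_point_in_realization:
  assumes "x \<in> topspace (l1_sphere k)"
  shows "cross_polytope_point x \<in> topspace (geometric_realization W (cross_polytope_boundary p q k))"
proof -
  let ?g = "\<lambda>i w. (if w = p i then max (x i) 0 else 0) + (if w = q i then max (- x i) 0 else 0)"
  have "sum (cross_polytope_point x) W = (\<Sum>w\<in>W. \<Sum>i\<le>k. ?g i w)"
    by (simp add: cross_polytope_point_def)
  also have "\<dots> = (\<Sum>i\<le>k. max (x i) 0 + max (- x i) 0)"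
    using fin p(1) q(1) by (subst sum.swap) (auto simp: sum.distrib image_subset_iff intro!: sum.cong)
  also have "\<dots> = (\<Sum>i\<le>k. \<bar>x i\<bar>)"
    by (intro sum.cong) auto
  also have "\<dots> = 1" using assms by (simp add: l1_sphere_def)
  finally have "sum (cross_polytope_point x) W = 1" .
  moreover have "support_on W (cross_polytope_point x) \<in> cross_polytope_boundary p q k"
    using cross_polytope_point_other
    by (fastforce simp: cross_polytope_boundary_def support_on_def cross_polytope_point_p cross_polytope_point_q)
  ultimately show ?thesis
    by (auto simp: topspace_geometric_realization cross_polytope_point_def intro!: sum_nonneg)
qed

lemma cross_polytope_realization_homeomorphic_l1_sphere:
  "geometric_realization W (cross_polytope_boundary p q k) homeomorphic_space l1_sphere k"
proof -
  let ?R = "geometric_realization W (cross_polytope_boundary p q k)"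
  define coords where "coords f = (\<lambda>i. if i \<le> k then f (p i) - f (q i) else 0)" for f :: "'a \<Rightarrow> real"
  have "continuous_map ?R (l1_sphere k) coords"
    unfolding l1_sphere_def continuous_map_in_subtopology continuous_map_componentwise_UNIV
    using p(1) q(1) in_cross_polytope_realizationD(4)
    by (auto simp: coords_def image_subset_iff
        intro!: continuous_intros continuous_map_geometric_realization_coordinate)
  moreover have "continuous_map (l1_sphere k) ?R cross_polytope_point"
    using cross_polytope_point_in_realization
    by (intro continuous_map_into_geometric_realization)
      (auto simp: cross_polytope_point_def
        intro!: continuous_intros continuous_map_l1_sphere_projection)
  moreover have "cross_polytope_point (coords f) = f" if "f \<in> topspace ?R" for f
  proof
    fix w
    note f = in_cross_polytope_realizationD[OF that]
    consider (p) i where "i \<le> k" "w = p i" | (q) i where "i \<le> k" "w = q i"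
      | (W) "w \<in> W" "w \<notin> p ` {..k} \<union> q ` {..k}" | (out) "w \<notin> W" by blast
    then show "cross_polytope_point (coords f) w = f w"
    proof cases
      case p then show ?thesis using f(2,3)[of i] by (auto simp: cross_polytope_point_p coords_def)
    next
      case q then show ?thesis using f(2,3)[of i] by (auto simp: cross_polytope_point_q coords_def)
    next
      case W then show ?thesis using f(1) cross_polytope_point_other by simp
    next
      case out then show ?thesis
        using that by (auto simp: cross_polytope_point_def topspace_geometric_realization extensional_def)
    qed
  qed
  moreover have "coords (cross_polytope_point x) = x" if "x \<in> topspace (l1_sphere k)" for x
    using that by (intro ext) (auto simp: coords_def cross_polytope_point_p cross_polytope_point_q l1_sphere_def)
  ultimately show ?thesis
    unfolding homeomorphic_space_def homeomorphic_maps_def by blast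
qed

end

section \<open>Perfect matchings of the ladder\<close>

definition rung :: "nat \<Rightarrow> (nat \<times> nat) set" where "rung j = {(0, j), (1, j)}"
definition top_edge :: "nat \<Rightarrow> (nat \<times> nat) set" where "top_edge j = {(0, j), (0, Suc j)}"
definition bottom_edge :: "nat \<Rightarrow> (nat \<times> nat) set" where "bottom_edge j = {(1, j), (1, Suc j)}"

lemma grid_edges_iff:
  "e \<in> grid_edges n \<longleftrightarrow>
     (\<exists>j<n. e = rung j) \<or> (\<exists>j. Suc j < n \<and> (e = top_edge j \<or> e = bottom_edge j))"
proof
  assume "e \<in> grid_edges n"
  then obtain a b c d where e: "e = {(a, b), (c, d)}" "a < 2" "b < n" "c < 2" "d < n"
    and adj: "grid_adj (a, b) (c, d)"
    unfolding grid_edges_def grid_vertices_def by auto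
  from adj consider "a = c" "b = Suc d" | "a = c" "d = Suc b" | "b = d" "a = Suc c" | "b = d" "c = Suc a"
    unfolding grid_adj_def by auto
  then show "(\<exists>j<n. e = rung j) \<or> (\<exists>j. Suc j < n \<and> (e = top_edge j \<or> e = bottom_edge j))"
    by cases (use e in \<open>auto simp: rung_def top_edge_def bottom_edge_def less_2_cases_iff insert_commute\<close>)
next
  have "{u, v} \<in> grid_edges n" if "u \<in> grid_vertices n" "v \<in> grid_vertices n" "grid_adj u v" for u v
    using that unfolding grid_edges_def by blast
  then show "(\<exists>j<n. e = rung j) \<or> (\<exists>j. Suc j < n \<and> (e = top_edge j \<or> e = bottom_edge j)) \<Longrightarrow>
      e \<in> grid_edges n"
    by (auto simp: rung_def top_edge_def bottom_edge_def grid_vertices_def grid_adj_def)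
qed

lemma grid_edge_eq_iff [simp]:
  "rung i = rung j \<longleftrightarrow> i = j" "top_edge i = top_edge j \<longleftrightarrow> i = j"
  "bottom_edge i = bottom_edge j \<longleftrightarrow> i = j"
  "rung i \<noteq> top_edge j" "rung i \<noteq> bottom_edge j" "top_edge i \<noteq> bottom_edge j"
  "top_edge j \<noteq> rung i" "bottom_edge j \<noteq> rung i" "bottom_edge j \<noteq> top_edge i"
  by (auto simp: rung_def top_edge_def bottom_edge_def doubleton_eq_iff)

lemma in_grid_edge_iff [simp]:
  "x \<in> rung j \<longleftrightarrow> x = (0, j) \<or> x = (1, j)"
  "x \<in> top_edge j \<longleftrightarrow> x = (0, j) \<or> x = (0, Suc j)"
  "x \<in> bottom_edge j \<longleftrightarrow> x = (1, j) \<or> x = (1, Suc j)"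
  by (auto simp: rung_def top_edge_def bottom_edge_def)

lemma grid_edge_in_grid_edges_iff [simp]:
  "rung j \<in> grid_edges n \<longleftrightarrow> j < n"
  "top_edge j \<in> grid_edges n \<longleftrightarrow> Suc j < n"
  "bottom_edge j \<in> grid_edges n \<longleftrightarrow> Suc j < n"
  by (auto simp: grid_edges_iff)

lemma finite_grid_edges: "finite (grid_edges n)"
proof -
  have "grid_edges n \<subseteq> rung ` {..<n} \<union> top_edge ` {..<n} \<union> bottom_edge ` {..<n}"
    by (auto simp: grid_edges_iff)
  then show ?thesis by (rule finite_subset) simp
qed

lemma grid_edges_subset_vertices: "e \<in> grid_edges n \<Longrightarrow> e \<subseteq> grid_vertices n"
  by (auto simp: grid_edges_iff grid_vertices_def)

lemma perfect_matchingI: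
  assumes "M \<subseteq> E" "disjoint M" "\<And>v. v \<in> V \<Longrightarrow> \<exists>e\<in>M. v \<in> e"
  shows "perfect_matching V E M"
  unfolding perfect_matching_def
proof (intro conjI ballI)
  fix v assume "v \<in> V"
  then obtain e where e: "e \<in> M" "v \<in> e" using assms(3) by blast
  moreover have "e' = e" if "e' \<in> M" "v \<in> e'" for e'
    using assms(2) that e unfolding pairwise_def disjnt_def by blast
  ultimately show "\<exists>!e. e \<in> M \<and> v \<in> e" by blast
qed (rule assms(1))

lemma perfect_matching_unique:
  "perfect_matching V E M \<Longrightarrow> v \<in> V \<Longrightarrow> e \<in> M \<Longrightarrow> e' \<in> M \<Longrightarrow> v \<in> e \<Longrightarrow> v \<in> e' \<Longrightarrow> e = e'"
  unfolding perfect_matching_def by blast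

lemma perfect_matching_complex_disjoint:
  assumes "\<And>e. e \<in> E \<Longrightarrow> e \<subseteq> V" and "\<sigma> \<in> perfect_matching_complex V E"
  shows "\<sigma> \<subseteq> E" "disjoint \<sigma>"
proof -
  obtain M where M: "perfect_matching V E M" "\<sigma> \<subseteq> M"
    using assms(2) by (auto simp: perfect_matching_complex_def)
  then show "\<sigma> \<subseteq> E" by (auto simp: perfect_matching_def)
  show "disjoint \<sigma>"
    unfolding pairwise_def disjnt_def
  proof (intro ballI impI equals0I)
    fix e e' v assume "e \<in> \<sigma>" "e' \<in> \<sigma>" "e \<noteq> e'" "v \<in> e \<inter> e'"
    moreover have "v \<in> V" using calculation M assms(1) by (auto simp: perfect_matching_def)
    ultimately show False using perfect_matching_unique[OF M(1)] M(2) by blast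
  qed
qed

lemma perfect_matching_complex_down_closed:
  "\<sigma> \<in> perfect_matching_complex V E \<Longrightarrow> \<tau> \<subseteq> \<sigma> \<Longrightarrow> \<tau> \<in> perfect_matching_complex V E"
  unfolding perfect_matching_complex_def by blast

abbreviation grid_pm_complex :: "nat \<Rightarrow> (nat \<times> nat) set set set" where
  "grid_pm_complex n \<equiv> perfect_matching_complex (grid_vertices n) (grid_edges n)"

lemma disjoint_overlap_eq: "disjoint \<sigma> \<Longrightarrow> e \<in> \<sigma> \<Longrightarrow> e' \<in> \<sigma> \<Longrightarrow> x \<in> e \<Longrightarrow> x \<in> e' \<Longrightarrow> e = e'"
  unfolding pairwise_def disjnt_def by blast

lemma disjoint_bottom_edge:
  assumes "disjoint \<sigma>" "bottom_edge c \<in> \<sigma>"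
  shows "bottom_edge (Suc c) \<notin> \<sigma>" "rung c \<notin> \<sigma>" "rung (Suc c) \<notin> \<sigma>"
  using disjoint_overlap_eq[OF assms(1) assms(2), of _ "(1, Suc c)"]
    disjoint_overlap_eq[OF assms(1) assms(2), of _ "(1, c)"] by force+

text \<open>The edge covering the vertex (r, c) in the perfect matching that completes a partial matching
  without top edges: every bottom edge is doubled by the top edge above it, and the remaining
  columns are covered by rungs.\<close>
definition completion_edge :: "(nat \<times> nat) set set \<Rightarrow> nat \<Rightarrow> nat \<Rightarrow> (nat \<times> nat) set" where
  "completion_edge \<sigma> r c =
     (if bottom_edge c \<in> \<sigma> then if r = 0 then top_edge c else bottom_edge c
      else if 0 < c \<and> bottom_edge (c - 1) \<in> \<sigma> then if r = 0 then top_edge (c - 1) else bottom_edge (c - 1)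
      else rung c)"

lemma completion_edge_consistent:
  assumes "disjoint \<sigma>" "r < 2" "r' < 2" "(r, c) \<in> completion_edge \<sigma> r' c'"
  shows "completion_edge \<sigma> r c = completion_edge \<sigma> r' c'"
  using assms disjoint_bottom_edge[OF assms(1)]
  by (auto simp: completion_edge_def less_2_cases_iff split: if_splits)

definition matching_completion :: "nat \<Rightarrow> (nat \<times> nat) set set \<Rightarrow> (nat \<times> nat) set set" where
  "matching_completion n \<sigma> = {completion_edge \<sigma> r c | r c. r < 2 \<and> c < n}"

lemma completion_edge_in_matching_completion:
  "r < 2 \<Longrightarrow> c < n \<Longrightarrow> completion_edge \<sigma> r c \<in> matching_completion n \<sigma>"
  unfolding matching_completion_def by blast

lemma perfect_matching_matching_completion:
  assumes "\<sigma> \<subseteq> grid_edges n" "disjoint \<sigma>"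
  shows "perfect_matching (grid_vertices n) (grid_edges n) (matching_completion n \<sigma>)"
  unfolding perfect_matching_def
proof (intro conjI ballI)
  let ?M = "matching_completion n \<sigma>"
  have "completion_edge \<sigma> r c \<in> grid_edges n" if "c < n" for r c
    using that assms(1) by (auto simp: completion_edge_def)
  then show "?M \<subseteq> grid_edges n" by (auto simp: matching_completion_def)
  fix v assume "v \<in> grid_vertices n"
  then obtain r c where v: "v = (r, c)" "r < 2" "c < n" by (auto simp: grid_vertices_def)
  show "\<exists>!e. e \<in> ?M \<and> v \<in> e"
  proof (rule ex1I[of _ "completion_edge \<sigma> r c"])
    show "completion_edge \<sigma> r c \<in> ?M \<and> v \<in> completion_edge \<sigma> r c"
      using v by (auto simp: matching_completion_def completion_edge_def less_2_cases_iff)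
    fix e assume e: "e \<in> ?M \<and> v \<in> e"
    then obtain r' c' where "e = completion_edge \<sigma> r' c'" "r' < 2"
      by (auto simp: matching_completion_def)
    then show "e = completion_edge \<sigma> r c"
      using completion_edge_consistent[OF assms(2) v(2)] e v(1) by metis
  qed
qed

lemma subset_matching_completion:
  assumes \<sigma>: "\<sigma> \<subseteq> grid_edges n" "disjoint \<sigma>" and no_top: "\<And>j. top_edge j \<notin> \<sigma>"
  shows "\<sigma> \<subseteq> matching_completion n \<sigma>"
proof
  fix e assume e: "e \<in> \<sigma>"
  then consider j where "j < n" "e = rung j" | j where "e = bottom_edge j" "Suc j < n"
    using \<sigma>(1) no_top by (force simp: grid_edges_iff)
  then show "e \<in> matching_completion n \<sigma>"
  proof cases
    case 1
    have "bottom_edge j \<notin> \<sigma>" using disjoint_bottom_edge(2)[OF \<sigma>(2)] e 1 by blast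
    moreover have "bottom_edge (j - 1) \<notin> \<sigma>" if "0 < j"
      using disjoint_bottom_edge(3)[OF \<sigma>(2), of "j - 1"] e 1 that by auto
    ultimately have "completion_edge \<sigma> 0 j = e" using 1 by (auto simp: completion_edge_def)
    then show ?thesis using completion_edge_in_matching_completion[of 0 j n \<sigma>] 1 by simp
  next
    case 2
    then have "completion_edge \<sigma> 1 j = e" using e by (simp add: completion_edge_def)
    then show ?thesis using completion_edge_in_matching_completion[of 1 j n \<sigma>] 2 by simp
  qed
qed

lemma grid_pm_complexI:
  assumes "\<sigma> \<subseteq> grid_edges n" "disjoint \<sigma>" "\<And>j. top_edge j \<notin> \<sigma>"
  shows "\<sigma> \<in> grid_pm_complex n"
  unfolding perfect_matching_complex_def
  using perfect_matching_matching_completion[OF assms(1,2)] subset_matching_completion[OF assms]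
  by blast

lemma grid_edge_at_top_vertex:
  "e \<in> grid_edges n \<Longrightarrow> (0, c) \<in> e \<Longrightarrow> e = rung c \<or> e = top_edge c \<or> (0 < c \<and> e = top_edge (c - 1))"
  by (auto simp: grid_edges_iff)

lemma grid_edge_at_bottom_vertex:
  "e \<in> grid_edges n \<Longrightarrow> (1, c) \<in> e \<Longrightarrow> e = rung c \<or> e = bottom_edge c \<or> (0 < c \<and> e = bottom_edge (c - 1))"
  by (auto simp: grid_edges_iff)

lemma top_edge_in_perfect_matching_iff_if_left_free:
  assumes M: "perfect_matching (grid_vertices n) (grid_edges n) M" and j: "Suc j < n"
    and free: "0 < j \<Longrightarrow> top_edge (j - 1) \<notin> M \<and> bottom_edge (j - 1) \<notin> M"
  shows "top_edge j \<in> M \<longleftrightarrow> bottom_edge j \<in> M"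
proof -
  note unique = perfect_matching_unique[OF M]
  have edges: "M \<subseteq> grid_edges n" using M by (simp add: perfect_matching_def)
  have cover: "\<exists>e\<in>M. (r, j) \<in> e" if "r < 2" for r
  proof -
    have "(r, j) \<in> grid_vertices n" using that j by (simp add: grid_vertices_def)
    then show ?thesis using M unfolding perfect_matching_def by blast
  qed
  obtain e where e: "e \<in> M" "(0, j) \<in> e" "e \<in> grid_edges n"
    using cover[of 0] edges by auto
  have "e = rung j \<or> e = top_edge j" using grid_edge_at_top_vertex[OF e(3,2)] free e(1) by auto
  then show ?thesis
  proof
    assume "e = rung j"
    then show ?thesis
      using unique[of "(0, j)" e "top_edge j"] unique[of "(1, j)" e "bottom_edge j"] e j
      by (auto simp: grid_vertices_def)
  next
    assume top: "e = top_edge j"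
    have "rung j \<notin> M" using unique[of "(0, j)" e "rung j"] top e j by (auto simp: grid_vertices_def)
    moreover obtain e' where e': "e' \<in> M" "(1, j) \<in> e'" "e' \<in> grid_edges n"
      using cover[of 1] edges by auto
    ultimately have "e' = bottom_edge j"
      using grid_edge_at_bottom_vertex[OF e'(3,2)] free by auto
    then show ?thesis using e top e' by auto
  qed
qed

lemma top_edge_in_perfect_matching_iff:
  assumes M: "perfect_matching (grid_vertices n) (grid_edges n) M"
  shows "Suc j < n \<Longrightarrow> top_edge j \<in> M \<longleftrightarrow> bottom_edge j \<in> M"
proof (induction j)
  case 0
  then show ?case using top_edge_in_perfect_matching_iff_if_left_free[OF M] by simp
next
  case (Suc j)
  show ?case
  proof (cases "top_edge j \<in> M")
    case True
    then have "bottom_edge j \<in> M" using Suc by simp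
    then show ?thesis
      using True perfect_matching_unique[OF M, of "(0, Suc j)" "top_edge j" "top_edge (Suc j)"]
        perfect_matching_unique[OF M, of "(1, Suc j)" "bottom_edge j" "bottom_edge (Suc j)"] Suc.prems
      by (auto simp: grid_vertices_def)
  next
    case False
    then have "bottom_edge j \<notin> M" using Suc by simp
    then show ?thesis using top_edge_in_perfect_matching_iff_if_left_free[OF M Suc.prems] False by simp
  qed
qed

section \<open>Collapsing the perfect matching complex of the ladder\<close>

lemma grid_pm_complex_face:
  "\<sigma> \<in> grid_pm_complex n \<Longrightarrow> \<sigma> \<subseteq> grid_edges n \<and> disjoint \<sigma>"
  using perfect_matching_complex_disjoint[OF grid_edges_subset_vertices] by blast

lemma top_edge_notin_if_deleted:
  assumes "top_edge ` {..<n - 1} \<subseteq> D" "\<sigma> \<subseteq> grid_edges n" "\<sigma> \<inter> D = {}"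
  shows "top_edge j \<notin> \<sigma>"
proof
  assume j: "top_edge j \<in> \<sigma>"
  then have "j < n - 1" using assms(2) by auto
  then show False using j assms by blast
qed

lemma deletion_grid_pm_complex_iff:
  assumes "top_edge ` {..<n - 1} \<subseteq> D"
  shows "\<sigma> \<in> deletion (grid_pm_complex n) D \<longleftrightarrow> \<sigma> \<subseteq> grid_edges n \<and> disjoint \<sigma> \<and> \<sigma> \<inter> D = {}"
proof
  assume \<sigma>: "\<sigma> \<subseteq> grid_edges n \<and> disjoint \<sigma> \<and> \<sigma> \<inter> D = {}"
  then have "top_edge j \<notin> \<sigma>" for j using top_edge_notin_if_deleted[OF assms] by blast
  then show "\<sigma> \<in> deletion (grid_pm_complex n) D"
    using \<sigma> by (auto simp: deletion_def intro: grid_pm_complexI)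
qed (auto simp: deletion_def dest: grid_pm_complex_face)

lemma insert_rung_deletion_grid_pm_complex:
  assumes D: "top_edge ` {..<n - 1} \<subseteq> D" "rung c \<notin> D" and c: "c < n"
    and \<sigma>: "\<sigma> \<in> deletion (grid_pm_complex n) D" "bottom_edge c \<notin> \<sigma>"
    and prev: "0 < c \<Longrightarrow> bottom_edge (c - 1) \<in> D"
  shows "insert (rung c) \<sigma> \<in> deletion (grid_pm_complex n) D"
proof -
  have \<sigma>': "\<sigma> \<subseteq> grid_edges n" "disjoint \<sigma>" "\<sigma> \<inter> D = {}"
    using \<sigma>(1) deletion_grid_pm_complex_iff[OF D(1)] by auto
  have "disjnt (rung c) e" if e: "e \<in> \<sigma>" "e \<noteq> rung c" for e
  proof (rule ccontr)
    assume "\<not> disjnt (rung c) e"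
    then have "(0, c) \<in> e \<or> (1, c) \<in> e" by (auto simp: disjnt_def)
    moreover have "e \<in> grid_edges n" using e(1) \<sigma>'(1) by blast
    ultimately have "e = rung c \<or> e = top_edge c \<or> e = bottom_edge c \<or>
        (0 < c \<and> (e = top_edge (c - 1) \<or> e = bottom_edge (c - 1)))"
      using grid_edge_at_top_vertex grid_edge_at_bottom_vertex by blast
    then show False
      using e \<sigma>'(3) D(2) \<sigma>(2) prev top_edge_notin_if_deleted[OF D(1) \<sigma>'(1,3)] by auto
  qed
  moreover have "rung c \<in> grid_edges n" using c by simp
  ultimately show ?thesis
    using \<sigma>' D(2) deletion_grid_pm_complex_iff[OF D(1)]
    by (auto simp: pairwise_insert disjnt_sym)
qed

lemma bottom_edge_dominates_top_edge:
  assumes "bottom_edge j \<notin> D"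
  shows "dominates (deletion (grid_pm_complex n) D) (bottom_edge j) (top_edge j)"
  unfolding dominates_def
proof (intro ballI impI)
  fix \<sigma> assume \<sigma>: "\<sigma> \<in> deletion (grid_pm_complex n) D" and top: "top_edge j \<in> \<sigma>"
  then obtain M where M: "perfect_matching (grid_vertices n) (grid_edges n) M" "\<sigma> \<subseteq> M" "\<sigma> \<inter> D = {}"
    by (auto simp: deletion_def perfect_matching_complex_def)
  then have "Suc j < n" using top by (auto simp: perfect_matching_def)
  then have "bottom_edge j \<in> M" using top_edge_in_perfect_matching_iff[OF M(1)] M(2) top by blast
  then show "insert (bottom_edge j) \<sigma> \<in> deletion (grid_pm_complex n) D"
    using M assms by (auto simp: deletion_def perfect_matching_complex_def)
qed

lemma homotopy_equivalent_deletion_top_edges: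
  "geometric_realization (grid_edges n) (grid_pm_complex n) homotopy_equivalent_space
     geometric_realization (grid_edges n) (deletion (grid_pm_complex n) (top_edge ` {..<n - 1}))"
proof -
  have "geometric_realization (grid_edges n) (deletion (grid_pm_complex n) {}) homotopy_equivalent_space
     geometric_realization (grid_edges n) (deletion (grid_pm_complex n) ({} \<union> top_edge ` {..<n - 1}))"
    by (intro homotopy_equivalent_deletion_dominated_sequence[where a = bottom_edge])
      (auto simp: finite_grid_edges intro: perfect_matching_complex_down_closed bottom_edge_dominates_top_edge)
  then show ?thesis by simp
qed

lemma homotopy_equivalent_deletion_odd_bottom_edges:
  assumes "2 * m < n"
  defines "T \<equiv> top_edge ` {..<n - 1}"
  shows "geometric_realization (grid_edges n) (deletion (grid_pm_complex n) T)
           homotopy_equivalent_space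
         geometric_realization (grid_edges n)
           (deletion (grid_pm_complex n) (T \<union> (\<lambda>i. bottom_edge (2 * i + 1)) ` {..<m}))"
proof -
  have "dominates (deletion (grid_pm_complex n) (T \<union> (\<lambda>i. bottom_edge (2 * i + 1)) ` {..<i}))
          (rung (2 * i)) (bottom_edge (2 * i + 1))" if "i < m" for i
    unfolding dominates_def
  proof (intro ballI impI)
    fix \<sigma> assume \<sigma>: "\<sigma> \<in> deletion (grid_pm_complex n) (T \<union> (\<lambda>i. bottom_edge (2 * i + 1)) ` {..<i})"
      and b: "bottom_edge (2 * i + 1) \<in> \<sigma>"
    have "bottom_edge (2 * i) \<notin> \<sigma>"
      using disjoint_bottom_edge(1)[of \<sigma> "2 * i"] b \<sigma> grid_pm_complex_face by (auto simp: deletion_def)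
    moreover have "bottom_edge (2 * i - 1) \<in> (\<lambda>i. bottom_edge (2 * i + 1)) ` {..<i}" if "0 < 2 * i"
      using that by (intro image_eqI[of _ _ "i - 1"]) auto
    ultimately show "insert (rung (2 * i)) \<sigma> \<in>
        deletion (grid_pm_complex n) (T \<union> (\<lambda>i. bottom_edge (2 * i + 1)) ` {..<i})"
      using \<sigma> \<open>i < m\<close> assms by (intro insert_rung_deletion_grid_pm_complex) (auto simp: T_def)
  qed
  then show ?thesis
    using assms
    by (intro homotopy_equivalent_deletion_dominated_sequence[where a = "\<lambda>i. rung (2 * i)"])
      (auto simp: finite_grid_edges intro: perfect_matching_complex_down_closed)
qed

lemma homotopy_equivalent_deletion_odd_rungs:
  assumes n: "n = 2 * k + 2"
  defines "D \<equiv> top_edge ` {..<n - 1} \<union> (\<lambda>i. bottom_edge (2 * i + 1)) ` {..<k}"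
  shows "geometric_realization (grid_edges n) (deletion (grid_pm_complex n) D)
           homotopy_equivalent_space
         geometric_realization (grid_edges n)
           (deletion (grid_pm_complex n) (D \<union> (\<lambda>i. rung (2 * i + 1)) ` {..<k + 1}))"
proof -
  have "dominates (deletion (grid_pm_complex n) (D \<union> (\<lambda>i. rung (2 * i + 1)) ` {..<i}))
          (rung (2 * i)) (rung (2 * i + 1))" if "i < k + 1" for i
    unfolding dominates_def
  proof (intro ballI impI)
    fix \<sigma> assume \<sigma>: "\<sigma> \<in> deletion (grid_pm_complex n) (D \<union> (\<lambda>i. rung (2 * i + 1)) ` {..<i})"
      and r: "rung (2 * i + 1) \<in> \<sigma>"
    have "bottom_edge (2 * i) \<notin> \<sigma>"
      using disjoint_bottom_edge(3)[of \<sigma> "2 * i"] r \<sigma> grid_pm_complex_face by (auto simp: deletion_def)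
    moreover have "bottom_edge (2 * i - 1) \<in> D" if "0 < 2 * i"
      using that \<open>i < k + 1\<close> unfolding D_def by (intro UnI2 image_eqI[of _ _ "i - 1"]) auto
    moreover have "rung (2 * i) \<notin> (\<lambda>i. rung (2 * i + 1)) ` {..<i}" by auto
    ultimately show "insert (rung (2 * i)) \<sigma> \<in>
        deletion (grid_pm_complex n) (D \<union> (\<lambda>i. rung (2 * i + 1)) ` {..<i})"
      using \<sigma> \<open>i < k + 1\<close> n by (intro insert_rung_deletion_grid_pm_complex) (auto simp: D_def)
  qed
  then show ?thesis
    using n by (intro homotopy_equivalent_deletion_dominated_sequence[where a = "\<lambda>i. rung (2 * i)"])
      (auto simp: finite_grid_edges intro: perfect_matching_complex_down_closed)
qed

lemma contractible_deletion_odd_bottom_edges: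
  assumes n: "n = 2 * q + 1"
  shows "contractible_space (geometric_realization (grid_edges n)
           (deletion (grid_pm_complex n) (top_edge ` {..<n - 1} \<union> (\<lambda>i. bottom_edge (2 * i + 1)) ` {..<q})))"
proof (rule contractible_geometric_realization_cone[where c = "rung (2 * q)"])
  fix \<sigma> assume \<sigma>: "\<sigma> \<in> deletion (grid_pm_complex n) (top_edge ` {..<n - 1} \<union> (\<lambda>i. bottom_edge (2 * i + 1)) ` {..<q})"
  have "bottom_edge (2 * q) \<notin> grid_edges n" using n by simp
  then have "bottom_edge (2 * q) \<notin> \<sigma>"
    using \<sigma> grid_pm_complex_face[of \<sigma> n] by (auto simp: deletion_def)
  moreover have "bottom_edge (2 * q - 1) \<in> (\<lambda>i. bottom_edge (2 * i + 1)) ` {..<q}" if "0 < 2 * q"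
    using that by (intro image_eqI[of _ _ "q - 1"]) auto
  ultimately show "insert (rung (2 * q)) \<sigma> \<in> deletion (grid_pm_complex n) (top_edge ` {..<n - 1} \<union> (\<lambda>i. bottom_edge (2 * i + 1)) ` {..<q})"
    using \<sigma> n by (intro insert_rung_deletion_grid_pm_complex) auto
qed (use n in \<open>auto simp: finite_grid_edges intro: deletion_down_closed perfect_matching_complex_down_closed\<close>)

lemma grid_edges_diff_odd_edges:
  assumes n: "n = 2 * k + 2"
  shows "grid_edges n - (top_edge ` {..<n - 1} \<union> (\<lambda>i. bottom_edge (2 * i + 1)) ` {..<k}
                          \<union> (\<lambda>i. rung (2 * i + 1)) ` {..<k + 1})
         = (\<lambda>i. rung (2 * i)) ` {..k} \<union> (\<lambda>i. bottom_edge (2 * i)) ` {..k}"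
    (is "grid_edges n - ?D = ?P")
proof (intro equalityI subsetI)
  have parity: "j = 2 * (j div 2) \<or> j = 2 * (j div 2) + 1" for j :: nat by presburger
  fix e assume e: "e \<in> grid_edges n - ?D"
  then consider j where "j < n" "e = rung j" | j where "Suc j < n" "e = bottom_edge j"
    | j where "Suc j < n" "e = top_edge j"
    by (auto simp: grid_edges_iff)
  then show "e \<in> ?P"
  proof cases
    case 1
    with e parity[of j] show ?thesis unfolding n by (auto simp: image_iff)
  next
    case 2
    with e parity[of j] show ?thesis unfolding n by (auto simp: image_iff)
  next
    case 3
    with e show ?thesis unfolding n by auto
  qed
next
  fix e assume "e \<in> ?P"
  then show "e \<in> grid_edges n - ?D"
    unfolding n by auto presburger+
qed

lemma disjoint_even_edges_iff:
  assumes \<sigma>: "\<sigma> \<subseteq> (\<lambda>i. rung (2 * i)) ` {..k} \<union> (\<lambda>i. bottom_edge (2 * i)) ` {..k}"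
  shows "disjoint \<sigma> \<longleftrightarrow> (\<forall>i\<le>k. \<not> (rung (2 * i) \<in> \<sigma> \<and> bottom_edge (2 * i) \<in> \<sigma>))"
proof
  assume "disjoint \<sigma>"
  then show "\<forall>i\<le>k. \<not> (rung (2 * i) \<in> \<sigma> \<and> bottom_edge (2 * i) \<in> \<sigma>)"
    using disjoint_bottom_edge(2) by blast
next
  assume no_pair: "\<forall>i\<le>k. \<not> (rung (2 * i) \<in> \<sigma> \<and> bottom_edge (2 * i) \<in> \<sigma>)"
  show "disjoint \<sigma>"
    unfolding pairwise_def disjnt_def
  proof (intro ballI impI equals0I)
    fix e e' v assume "e \<in> \<sigma>" "e' \<in> \<sigma>" "e \<noteq> e'" "v \<in> e \<inter> e'"
    moreover from this \<sigma> obtain i j where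
      "i \<le> k" "e = rung (2 * i) \<or> e = bottom_edge (2 * i)"
      "j \<le> k" "e' = rung (2 * j) \<or> e' = bottom_edge (2 * j)" by blast
    moreover from calculation have "i = j" by auto
    ultimately show False using no_pair by auto
  qed
qed

lemma deletion_odd_edges_eq_cross_polytope_boundary:
  assumes n: "n = 2 * k + 2"
  defines "D \<equiv> top_edge ` {..<n - 1} \<union> (\<lambda>i. bottom_edge (2 * i + 1)) ` {..<k}
                \<union> (\<lambda>i. rung (2 * i + 1)) ` {..<k + 1}"
  shows "deletion (grid_pm_complex n) D =
           cross_polytope_boundary (\<lambda>i. rung (2 * i)) (\<lambda>i. bottom_edge (2 * i)) k"
proof -
  have "top_edge ` {..<n - 1} \<subseteq> D" unfolding D_def by blast
  from deletion_grid_pm_complex_iff[OF this]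
  have "\<sigma> \<in> deletion (grid_pm_complex n) D \<longleftrightarrow>
          \<sigma> \<subseteq> (\<lambda>i. rung (2 * i)) ` {..k} \<union> (\<lambda>i. bottom_edge (2 * i)) ` {..k} \<and> disjoint \<sigma>" for \<sigma>
    unfolding D_def grid_edges_diff_odd_edges[OF n, symmetric] by auto
  then show ?thesis
    using disjoint_even_edges_iff by (auto simp: cross_polytope_boundary_def)
qed

lemma homeomorphic_sphere_deletion_odd_edges:
  assumes n: "n = 2 * k + 2"
  shows "geometric_realization (grid_edges n) (deletion (grid_pm_complex n)
           (top_edge ` {..<n - 1} \<union> (\<lambda>i. bottom_edge (2 * i + 1)) ` {..<k}
              \<union> (\<lambda>i. rung (2 * i + 1)) ` {..<k + 1}))
         homeomorphic_space nsphere k"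
proof -
  have "geometric_realization (grid_edges n)
          (cross_polytope_boundary (\<lambda>i. rung (2 * i)) (\<lambda>i. bottom_edge (2 * i)) k)
        homeomorphic_space l1_sphere k"
    using n by (intro cross_polytope_realization_homeomorphic_l1_sphere)
      (auto simp: finite_grid_edges inj_on_def)
  then show ?thesis
    unfolding deletion_odd_edges_eq_cross_polytope_boundary[OF n]
    using l1_sphere_homeomorphic_nsphere homeomorphic_space_trans by blast
qed

theorem theorem3p1:
  fixes n :: nat
  assumes "n \<ge> 1"
  shows "(odd n \<longrightarrow> contractible_space (grid_pm_complex_space n)) \<and>
         (\<forall>k. n = 2 * k + 2 \<longrightarrow>
              grid_pm_complex_space n homotopy_equivalent_space nsphere k)"
proof (intro conjI impI allI)
  let ?R = "geometric_realization (grid_edges n)" and ?T = "top_edge ` {..<n - 1}"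
  let ?B = "\<lambda>m. (\<lambda>i. bottom_edge (2 * i + 1)) ` {..<m}"
  have "grid_pm_complex_space n homotopy_equivalent_space ?R (deletion (grid_pm_complex n) ?T)"
    unfolding grid_pm_complex_space_def by (rule homotopy_equivalent_deletion_top_edges)
  note tops = homotopy_eqv_trans[OF this]
  {
    assume "odd n"
    then obtain q where n: "n = 2 * q + 1" by (auto elim: oddE)
    then have "grid_pm_complex_space n homotopy_equivalent_space
                 ?R (deletion (grid_pm_complex n) (?T \<union> ?B q))"
      by (intro tops homotopy_equivalent_deletion_odd_bottom_edges) simp
    then show "contractible_space (grid_pm_complex_space n)"
      using contractible_deletion_odd_bottom_edges[OF n] homotopy_equivalent_space_contractibility
      by blast
  next
    fix k assume n: "n = 2 * k + 2"
    then have "grid_pm_complex_space n homotopy_equivalent_space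
                 ?R (deletion (grid_pm_complex n) (?T \<union> ?B k))"
      by (intro tops homotopy_equivalent_deletion_odd_bottom_edges) simp
    also have "\<dots> homotopy_equivalent_space
                 ?R (deletion (grid_pm_complex n) (?T \<union> ?B k \<union> (\<lambda>i. rung (2 * i + 1)) ` {..<k + 1}))"
      by (rule homotopy_equivalent_deletion_odd_rungs[OF n])
    also have "\<dots> homotopy_equivalent_space nsphere k"
      by (rule homeomorphic_imp_homotopy_equivalent_space[OF homeomorphic_sphere_deletion_odd_edges[OF n]])
    finally show "grid_pm_complex_space n homotopy_equivalent_space nsphere k" .
  }
qed

end
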